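(* For $a\in(0,1]$ let $C_a=\{(x,y)\in\mathbb{Z}^2: x\ge0,\ |y|\le ax\}$ and let $m\in\mathbb{R}$. Then the divisible sandpile $s_a=m\mathbf 1_{C_a}$ on $\mathbb{Z}^2$ stabilizes if $\frac{2ma}{1+a^2}\le1$. Moreover, the divisible sandpile $s_0(x,y)=x\,\mathbf 1_{\{x>0,\,y=0\}}$ on $\mathbb{Z}^2$ stabilizes.
   Context: $\mathbb{Z}^2$ has its nearest-neighbour graph structure, $\Delta u(x)=\sum_{y\sim x}(u(y)-u(x))$. $s$ stabilizes if there exists $f:\mathbb{Z}^2\to[0,\infty)$ with $s+\Delta f\le1$ pointwise. *)

theory Defs
  imports Main "HOL.Real"
begin

definition lap :: "(int \<times> int \<Rightarrow> real) \<Rightarrow> int \<times> int \<Rightarrow> real" where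
  "lap u p = (case p of (x, y) \<Rightarrow>
      (u (x + 1, y) - u (x, y)) + (u (x - 1, y) - u (x, y))
    + (u (x, y + 1) - u (x, y)) + (u (x, y - 1) - u (x, y)))"

definition stabilizes :: "(int \<times> int \<Rightarrow> real) \<Rightarrow> bool" where
  "stabilizes s \<longleftrightarrow> (\<exists>f :: int \<times> int \<Rightarrow> real. (\<forall>p. f p \<ge> 0) \<and> (\<forall>p. s p + lap f p \<le> 1))"

definition cone :: "real \<Rightarrow> (int \<times> int) set" where
  "cone a = {(x, y). x \<ge> 0 \<and> real_of_int \<bar>y\<bar> \<le> a * real_of_int x}"

end

theory Submission imports Defs begin

text \<open>
  Both piles are stabilized by explicit odometers f \<ge> 0 with s + \<Delta>f \<le> 1.
  For the cone, put X = x + 1 + 1/a and let f be the quadratic (1 - a)/(4a) (a X^2 - y^2) on the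
  real cone |y| \<le> a X and the ramp (max 0 (X - |y|))^2/4 outside it. Since (X - |y|)^2/4 exceeds the
  quadratic by exactly (|y| - a X)^2/(4a), f lies below both the ramp and the quadratic plus
  (max 0 (|y| - a X))^2/(4a), touching each on its own region; comparing Laplacians at touching points gives \<Delta>f \<le> 1 everywhere, and
  \<Delta>f \<le> -(1 - a)^2/(2a) on the lattice cone, whose neighbourhoods the shift 1 + 1/a keeps inside the
  real cone. The hypothesis on m says precisely m - (1 - a)^2/(2a) \<le> 1.
  For the ray, f = (|x| - |y|)^2/4 works by direct computation.
\<close>

lemma lap_le_lap_of_touching_above:
  assumes "f p = g p" and "\<And>q. f q \<le> g q"
  shows "lap f p \<le> lap g p"
proof -
  obtain x y where "p = (x, y)" by force
  then show ?thesis
    using assms(1) assms(2)[of "(x + 1, y)"] assms(2)[of "(x - 1, y)"]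
      assms(2)[of "(x, y + 1)"] assms(2)[of "(x, y - 1)"]
    by (simp add: lap_def)
qed

lemma lap_add: "lap (\<lambda>q. f q + g q) p = lap f p + lap g p"
  by (simp add: lap_def split: prod.split)

lemma lap_quadratic:
  "lap (\<lambda>(x, y). \<alpha> * (real_of_int x + c)\<^sup>2 + \<beta> * (real_of_int y)\<^sup>2) p = 2 * \<alpha> + 2 * \<beta>"
  by (simp add: lap_def power2_eq_square algebra_simps split: prod.split)

lemma lap_ridge_le:
  fixes \<phi> :: "real \<Rightarrow> real"
  assumes mono: "\<And>k. \<phi> (k - 1) \<le> \<phi> (k + 1)"
    and second_diff: "\<And>k. \<phi> (k + 1) + \<phi> (k - 1) - 2 * \<phi> k \<le> d"
  shows "lap (\<lambda>(x, y). \<phi> (real_of_int x + c - \<bar>real_of_int y\<bar>)) p \<le> 2 * d"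
proof -
  obtain x y where p: "p = (x, y)" by force
  define u where "u = (\<lambda>(x, y). \<phi> (real_of_int x + c - \<bar>real_of_int y\<bar>))"
  define k where "k = real_of_int x + c - \<bar>real_of_int y\<bar>"
  have centre: "u (x, y) = \<phi> k"
    and horizontal: "u (x + 1, y) = \<phi> (k + 1)" "u (x - 1, y) = \<phi> (k - 1)"
    by (simp_all add: u_def k_def algebra_simps)
  have vertical: "u (x, y + 1) + u (x, y - 1) \<le> \<phi> (k + 1) + \<phi> (k - 1)"
  proof -
    consider "y > 0" | "y = 0" | "y < 0" by linarith
    then show ?thesis
    proof cases
      case 1
      then have "u (x, y + 1) = \<phi> (k - 1)" "u (x, y - 1) = \<phi> (k + 1)"
        by (simp_all add: u_def k_def algebra_simps)
      then show ?thesis by simp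
    next
      case 2
      then have "u (x, y + 1) = \<phi> (k - 1)" "u (x, y - 1) = \<phi> (k - 1)"
        by (simp_all add: u_def k_def)
      then show ?thesis using mono[of k] by simp
    next
      case 3
      then have "u (x, y + 1) = \<phi> (k + 1)" "u (x, y - 1) = \<phi> (k - 1)"
        by (simp_all add: u_def k_def algebra_simps)
      then show ?thesis by simp
    qed
  qed
  have "lap u p = u (x + 1, y) + u (x - 1, y) + u (x, y + 1) + u (x, y - 1) - 4 * u (x, y)"
    by (simp add: p lap_def)
  with centre horizontal vertical second_diff[of k] show ?thesis
    unfolding u_def[symmetric] by linarith
qed

definition ramp_square :: "real \<Rightarrow> real" where
  "ramp_square k = (max 0 k)\<^sup>2 / 4"

lemma ramp_square_nonneg: "0 \<le> ramp_square k"
  by (simp add: ramp_square_def)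

lemma ramp_square_mono: "k \<le> l \<Longrightarrow> ramp_square k \<le> ramp_square l"
  unfolding ramp_square_def by (intro divide_right_mono power_mono) auto

lemma ramp_square_le_square: "ramp_square k \<le> k\<^sup>2 / 4"
  by (simp add: ramp_square_def max_def)

lemma ramp_square_second_diff_le: "ramp_square (k + 1) + ramp_square (k - 1) - 2 * ramp_square k \<le> 1/2"
proof -
  consider "1 \<le> k" | "0 \<le> k" "k < 1" | "-1 \<le> k" "k < 0" | "k < -1" by linarith
  then show ?thesis
  proof cases
    case 1
    then show ?thesis by (simp add: ramp_square_def max_def power2_eq_square field_simps)
  next
    case 2
    have "0 \<le> (k - 1)\<^sup>2" by simp
    with 2 show ?thesis by (simp add: ramp_square_def max_def power2_eq_square field_simps)
  next
    case 3
    then have "(k + 1)\<^sup>2 \<le> 1" by (intro power_le_one) auto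
    with 3 show ?thesis by (simp add: ramp_square_def max_def)
  next
    case 4
    then show ?thesis by (simp add: ramp_square_def max_def)
  qed
qed

lemma lap_ramp_square_ridge_le:
  "lap (\<lambda>(x, y). ramp_square (real_of_int x + c - \<bar>real_of_int y\<bar>)) p \<le> 1"
proof -
  have "lap (\<lambda>(x, y). ramp_square (real_of_int x + c - \<bar>real_of_int y\<bar>)) p \<le> 2 * (1 / 2)"
    by (rule lap_ridge_le, rule ramp_square_mono, simp, rule ramp_square_second_diff_le)
  then show ?thesis by simp
qed

definition cone_quadratic :: "real \<Rightarrow> real \<Rightarrow> int \<times> int \<Rightarrow> real" where
  "cone_quadratic a c = (\<lambda>(x, y). (1 - a) / (4 * a) * (a * (real_of_int x + c)\<^sup>2 - (real_of_int y)\<^sup>2))"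

definition cone_excess :: "real \<Rightarrow> real \<Rightarrow> int \<times> int \<Rightarrow> real" where
  "cone_excess a c = (\<lambda>(x, y). (max 0 (\<bar>real_of_int y\<bar> - a * (real_of_int x + c)))\<^sup>2 / (4 * a))"

definition in_shifted_cone :: "real \<Rightarrow> real \<Rightarrow> int \<times> int \<Rightarrow> bool" where
  "in_shifted_cone a c = (\<lambda>(x, y). \<bar>real_of_int y\<bar> \<le> a * (real_of_int x + c))"

definition cone_odometer :: "real \<Rightarrow> real \<Rightarrow> int \<times> int \<Rightarrow> real" where
  "cone_odometer a c p = (if in_shifted_cone a c p then cone_quadratic a c p
     else (case p of (x, y) \<Rightarrow> ramp_square (real_of_int x + c - \<bar>real_of_int y\<bar>)))"

lemma lap_cone_quadratic:
  assumes "0 < a"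
  shows "lap (cone_quadratic a c) p = - ((1 - a)\<^sup>2 / (2 * a))"
proof -
  have quadratic: "cone_quadratic a c = (\<lambda>(x, y). (1 - a) / 4 * (real_of_int x + c)\<^sup>2
          + (- (1 - a) / (4 * a)) * (real_of_int y)\<^sup>2)"
    using assms by (auto simp: cone_quadratic_def fun_eq_iff field_simps split: prod.split)
  have "lap (cone_quadratic a c) p = 2 * ((1 - a) / 4) + 2 * (- (1 - a) / (4 * a))"
    unfolding quadratic by (rule lap_quadratic)
  also have "\<dots> = - ((1 - a)\<^sup>2 / (2 * a))"
    using assms by (simp add: field_simps power2_eq_square)
  finally show ?thesis .
qed

lemma square_split_by_cone:
  fixes a X Y :: real
  assumes "0 < a"
  shows "(X - \<bar>Y\<bar>)\<^sup>2 / 4 = (1 - a) / (4 * a) * (a * X\<^sup>2 - Y\<^sup>2) + (\<bar>Y\<bar> - a * X)\<^sup>2 / (4 * a)"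
  using assms by (simp add: field_simps power2_eq_square)

lemma cone_excess_eq_zero:
  "in_shifted_cone a c p \<Longrightarrow> cone_excess a c p = 0"
  by (auto simp: cone_excess_def in_shifted_cone_def)

lemma cone_excess_le:
  assumes "0 < a" "0 \<le> t" and "\<bar>real_of_int y\<bar> - a * (real_of_int x + c) \<le> t"
  shows "cone_excess a c (x, y) \<le> t\<^sup>2 / (4 * a)"
proof -
  have "(max 0 (\<bar>real_of_int y\<bar> - a * (real_of_int x + c)))\<^sup>2 \<le> t\<^sup>2"
    using assms by (intro power_mono) auto
  then show ?thesis using assms by (simp add: cone_excess_def divide_right_mono)
qed

lemma lap_cone_excess_le:
  assumes "0 < a" and "in_shifted_cone a c (x, y)"
  shows "lap (cone_excess a c) (x, y) \<le> a / 4 + 1 / (2 * a)"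
proof -
  have y: "\<bar>real_of_int y\<bar> \<le> a * (real_of_int x + c)"
    using assms(2) by (simp add: in_shifted_cone_def)
  have "cone_excess a c (x + 1, y) = 0"
    using y assms(1) by (intro cone_excess_eq_zero) (auto simp: in_shifted_cone_def algebra_simps)
  moreover have "cone_excess a c (x - 1, y) \<le> a\<^sup>2 / (4 * a)"
    using y assms(1) by (intro cone_excess_le) (auto simp: algebra_simps)
  moreover have "cone_excess a c (x, y + 1) \<le> 1\<^sup>2 / (4 * a)"
    and "cone_excess a c (x, y - 1) \<le> 1\<^sup>2 / (4 * a)"
    using y assms(1) by (intro cone_excess_le; simp)+
  moreover have "a\<^sup>2 / (4 * a) = a / 4" using assms(1) by (simp add: power2_eq_square)
  ultimately show ?thesis
    using cone_excess_eq_zero[OF assms(2)] by (simp add: lap_def)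
qed

lemma lap_cone_excess_eq_zero:
  assumes "\<bar>real_of_int y\<bar> + 1 \<le> a * (real_of_int x + c - 1)" and "0 < a"
  shows "lap (cone_excess a c) (x, y) = 0"
proof -
  have "in_shifted_cone a c q"
    if "q \<in> {(x, y), (x + 1, y), (x - 1, y), (x, y + 1), (x, y - 1)}" for q
    using that assms by (auto simp: in_shifted_cone_def algebra_simps)
  then show ?thesis by (simp add: lap_def cone_excess_eq_zero)
qed

lemma cone_odometer_nonneg:
  assumes "0 < a" "a \<le> 1"
  shows "0 \<le> cone_odometer a c p"
proof (cases "in_shifted_cone a c p")
  case True
  obtain x y where p: "p = (x, y)" by force
  define X where "X = real_of_int x + c"
  from True have Y: "\<bar>real_of_int y\<bar> \<le> a * X" by (simp add: p in_shifted_cone_def X_def)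
  have "(real_of_int y)\<^sup>2 \<le> (a * X)\<^sup>2"
    using Y by (metis abs_ge_zero abs_le_square_iff order_trans power2_abs power_mono)
  also have "\<dots> = a * (a * X\<^sup>2)" by (simp add: power2_eq_square)
  also have "\<dots> \<le> a * X\<^sup>2"
    using assms by (intro mult_left_mono mult_left_le_one_le) auto
  finally show ?thesis
    using True assms by (simp add: p cone_odometer_def cone_quadratic_def X_def)
next
  case False
  then show ?thesis by (simp add: cone_odometer_def ramp_square_nonneg split: prod.split)
qed

lemma cone_odometer_le_ramp_square:
  assumes "0 < a" "a \<le> 1"
  shows "cone_odometer a c (x, y) \<le> ramp_square (real_of_int x + c - \<bar>real_of_int y\<bar>)"
proof (cases "in_shifted_cone a c (x, y)")
  case True
  define X where "X = real_of_int x + c"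
  from True have Y: "\<bar>real_of_int y\<bar> \<le> a * X" by (simp add: in_shifted_cone_def X_def)
  have "0 \<le> a * X" using Y abs_ge_zero[of "real_of_int y"] by linarith
  with assms(1) have "0 \<le> X" by (simp add: zero_le_mult_iff)
  then have "a * X \<le> X" using assms by (intro mult_left_le_one_le) auto
  with Y have "\<bar>real_of_int y\<bar> \<le> X" by linarith
  then have "ramp_square (X - \<bar>real_of_int y\<bar>) = (X - \<bar>real_of_int y\<bar>)\<^sup>2 / 4"
    by (simp add: ramp_square_def)
  also have "\<dots> \<ge> cone_quadratic a c (x, y)"
    using square_split_by_cone[OF assms(1)] assms(1) by (simp add: cone_quadratic_def X_def)
  finally show ?thesis using True by (simp add: cone_odometer_def X_def)
next
  case False
  then show ?thesis by (simp add: cone_odometer_def)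
qed

lemma cone_odometer_le_quadratic_plus_excess:
  assumes "0 < a"
  shows "cone_odometer a c p \<le> cone_quadratic a c p + cone_excess a c p"
proof (cases "in_shifted_cone a c p")
  case True
  then show ?thesis by (simp add: cone_odometer_def cone_excess_eq_zero)
next
  case False
  obtain x y where p: "p = (x, y)" by force
  define X where "X = real_of_int x + c"
  from False have "a * X < \<bar>real_of_int y\<bar>" by (simp add: p in_shifted_cone_def X_def)
  then have "cone_excess a c p = (\<bar>real_of_int y\<bar> - a * X)\<^sup>2 / (4 * a)"
    by (simp add: p cone_excess_def X_def)
  moreover have "ramp_square (X - \<bar>real_of_int y\<bar>) \<le> (X - \<bar>real_of_int y\<bar>)\<^sup>2 / 4"
    by (rule ramp_square_le_square)
  ultimately show ?thesis
    using False square_split_by_cone[OF assms]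
    by (simp add: p cone_odometer_def cone_quadratic_def X_def)
qed

lemma lap_cone_odometer_le_in_shifted_cone:
  assumes "0 < a" and "in_shifted_cone a c p"
  shows "lap (cone_odometer a c) p \<le> - ((1 - a)\<^sup>2 / (2 * a)) + lap (cone_excess a c) p"
proof -
  have "lap (cone_odometer a c) p \<le> lap (\<lambda>q. cone_quadratic a c q + cone_excess a c q) p"
    using assms by (intro lap_le_lap_of_touching_above cone_odometer_le_quadratic_plus_excess)
      (simp_all add: cone_odometer_def cone_excess_eq_zero)
  then show ?thesis by (simp add: lap_add lap_cone_quadratic[OF assms(1)])
qed

lemma lap_cone_odometer_le_one:
  assumes "0 < a" "a \<le> 1"
  shows "lap (cone_odometer a c) p \<le> 1"
proof -
  obtain x y where p: "p = (x, y)" by force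
  show ?thesis
  proof (cases "in_shifted_cone a c p")
    case True
    have "- ((1 - a)\<^sup>2 / (2 * a)) + (a / 4 + 1 / (2 * a)) = 1 - a / 4"
      using assms by (simp add: field_simps power2_eq_square)
    then show ?thesis
      using lap_cone_odometer_le_in_shifted_cone[OF assms(1) True]
        lap_cone_excess_le[OF assms(1) True[unfolded p]] assms
      by (simp add: p)
  next
    case False
    have "lap (cone_odometer a c) p
        \<le> lap (\<lambda>(x, y). ramp_square (real_of_int x + c - \<bar>real_of_int y\<bar>)) p"
    proof (rule lap_le_lap_of_touching_above)
      show "cone_odometer a c p = (case p of (x, y) \<Rightarrow> ramp_square (real_of_int x + c - \<bar>real_of_int y\<bar>))"
        using False by (simp add: cone_odometer_def)
      show "cone_odometer a c q \<le> (case q of (x, y) \<Rightarrow> ramp_square (real_of_int x + c - \<bar>real_of_int y\<bar>))"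
        for q using cone_odometer_le_ramp_square[OF assms] by (cases q) simp
    qed
    then show ?thesis using lap_ramp_square_ridge_le by (rule order_trans)
  qed
qed

lemma lap_cone_odometer_on_cone:
  assumes "0 < a" and "p \<in> cone a"
  shows "lap (cone_odometer a (1 + 1 / a)) p \<le> - ((1 - a)\<^sup>2 / (2 * a))"
proof -
  obtain x y where p: "p = (x, y)" by force
  from assms(2) have "0 \<le> x" "\<bar>real_of_int y\<bar> \<le> a * real_of_int x"
    by (auto simp: p cone_def)
  moreover have "a * (real_of_int x + (1 + 1 / a) - 1) = a * real_of_int x + 1"
    using assms(1) by (simp add: field_simps)
  ultimately have neighbourhood: "\<bar>real_of_int y\<bar> + 1 \<le> a * (real_of_int x + (1 + 1 / a) - 1)"
    and centre: "in_shifted_cone a (1 + 1 / a) p"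
    using assms(1) by (auto simp: p in_shifted_cone_def algebra_simps)
  have "lap (cone_excess a (1 + 1 / a)) p = 0"
    unfolding p using neighbourhood assms(1) by (rule lap_cone_excess_eq_zero)
  then show ?thesis
    using lap_cone_odometer_le_in_shifted_cone[OF assms(1) centre] by simp
qed

lemma stabilizes_cone_pile:
  assumes "0 < a" "a \<le> 1" and "2 * m * a / (1 + a\<^sup>2) \<le> 1"
  shows "stabilizes (\<lambda>p. if p \<in> cone a then m else 0)"
  unfolding stabilizes_def
proof (intro exI conjI allI)
  let ?f = "cone_odometer a (1 + 1 / a)"
  show "0 \<le> ?f p" for p using cone_odometer_nonneg[OF assms(1,2)] .
  have "2 * m * a \<le> 1 + a\<^sup>2"
    using assms by (simp add: field_simps add_pos_nonneg)
  then have "m \<le> 1 + (1 - a)\<^sup>2 / (2 * a)"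
    using assms by (simp add: field_simps power2_eq_square)
  then show "(if p \<in> cone a then m else 0) + lap ?f p \<le> 1" for p
    using lap_cone_odometer_on_cone[OF assms(1), of p] lap_cone_odometer_le_one[OF assms(1,2)]
    by auto
qed

lemma stabilizes_ray_pile:
  "stabilizes (\<lambda>(x, y). if x > 0 \<and> y = 0 then real_of_int x else 0)"
  unfolding stabilizes_def
proof (intro exI conjI allI)
  let ?f = "\<lambda>(x, y). (\<bar>real_of_int x\<bar> - \<bar>real_of_int y\<bar>)\<^sup>2 / 4"
  show "0 \<le> ?f p" for p by (simp split: prod.split)
  fix p :: "int \<times> int"
  obtain x y where p: "p = (x, y)" by force
  have "x > 0 \<or> x = 0 \<or> x < 0" and "y > 0 \<or> y = 0 \<or> y < 0" by linarith+
  then show "(case p of (x, y) \<Rightarrow> if x > 0 \<and> y = 0 then real_of_int x else 0) + lap ?f p \<le> 1"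
    by (elim disjE) (auto simp: p lap_def power2_eq_square field_simps)
qed

theorem lemma6p4:
  shows "(\<forall>(a::real) (m::real). 0 < a \<and> a \<le> 1 \<and> 2 * m * a / (1 + a^2) \<le> 1 \<longrightarrow>
            stabilizes (\<lambda>p. if p \<in> cone a then m else 0))
       \<and> stabilizes (\<lambda>(x, y). if x > 0 \<and> y = 0 then real_of_int x else 0)"
  using stabilizes_cone_pile stabilizes_ray_pile by blast

end
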